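(* For all integers $n \geq 1$ and $i \geq 1$, the number of partitions of $n$ whose smallest part is exactly $i$ equals $$\sum_{s=1}^{i} (-1)^{s-1} \sum_{\pi \in U_{s,i}} p(n - |\pi|).$$
   Context: $p(m)$ is the number of partitions of $m$, with $p(0)=1$ and $p(m)=0$ for $m<0$. $U_{s,i}$ denotes the set of partitions into exactly $s$ distinct parts whose largest part equals $i$, and $|\pi|$ denotes the sum of the parts of $\pi$. *)

theory Defs
  imports Main "HOL-Library.Multiset"
begin

definition partitions :: "nat \<Rightarrow> nat multiset set" where
  "partitions m = {M. (\<forall>x\<in>#M. 0 < x) \<and> sum_mset M = m}"

definition part_count :: "int \<Rightarrow> nat" where
  "part_count m = (if m < 0 then 0 else card (partitions (nat m)))"

text \<open>U s i: partitions into exactly s distinct parts with largest part i,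
  represented as the set of their (distinct, positive) parts.\<close>
definition U :: "nat \<Rightarrow> nat \<Rightarrow> nat set set" where
  "U s i = {S. S \<subseteq> {1..} \<and> finite S \<and> card S = s \<and> i \<in> S \<and> (\<forall>x\<in>S. x \<le> i)}"

end

theory Submission
  imports Defs
begin

text \<open>Removing the smallest part i from a partition of n leaves a partition of n - i into
  parts \<open>\<ge> i\<close>. Let q(j, m) count the partitions of m into parts \<open>\<ge> j\<close>. Splitting according to
  whether the part j occurs gives q(j, m) = q(j + 1, m) + q(j, m - j), and unfolding this recurrence
  down to q(1, m) = p(m) yields the sieve q(i, m) = \<open>\<Sum>\<close> (-1)^|T| p(m - \<open>\<Sigma>\<close>T) over all
  \<open>T \<subseteq> {1, \<dots>, i - 1}\<close>. The sets \<open>T \<union> {i}\<close> are exactly the partitions into distinct parts with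
  largest part i, and grouping them by their number of parts gives the alternating sum.\<close>

lemma size_le_sum_mset_pos: "(\<forall>x\<in>#M. 0 < (x::nat)) \<Longrightarrow> size M \<le> sum_mset M"
  by (induction M) auto

lemma member_le_sum_mset: "(x::nat) \<in># M \<Longrightarrow> x \<le> sum_mset M"
  using sum_mset.remove[of x M] by simp

lemma finite_partitions: "finite (partitions m)"
proof (rule finite_subset)
  show "partitions m \<subseteq> (\<Union>k\<in>{0..m}. multisets_of_size {1..m} k)"
  proof
    fix M assume "M \<in> partitions m"
    hence pos: "\<forall>x\<in>#M. 0 < x" and sum: "sum_mset M = m" by (auto simp: partitions_def)
    have "size M \<le> m" using size_le_sum_mset_pos[OF pos] sum by simp
    moreover have "set_mset M \<subseteq> {1..m}" using pos sum member_le_sum_mset by fastforce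
    ultimately show "M \<in> (\<Union>k\<in>{0..m}. multisets_of_size {1..m} k)"
      by (auto simp: multisets_of_size_def)
  qed
qed auto

definition part_count_ge :: "nat \<Rightarrow> int \<Rightarrow> nat" where
  "part_count_ge j m =
    (if m < 0 then 0 else card {M \<in> partitions (nat m). \<forall>x\<in>#M. j \<le> x})"

lemma part_count_ge_le_1:
  assumes "j \<le> 1"
  shows "part_count_ge j m = part_count m"
  unfolding part_count_ge_def part_count_def partitions_def
  using assms by (auto intro!: arg_cong[where f = card])

lemma partitions_ge_containing_eq_image:
  assumes "0 < j"
  shows "{M \<in> partitions (m + j). (\<forall>x\<in>#M. j \<le> x) \<and> j \<in># M}
       = add_mset j ` {M \<in> partitions m. \<forall>x\<in>#M. j \<le> x}"
proof
  show "{M \<in> partitions (m + j). (\<forall>x\<in>#M. j \<le> x) \<and> j \<in># M}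
      \<subseteq> add_mset j ` {M \<in> partitions m. \<forall>x\<in>#M. j \<le> x}"
  proof
    fix M assume M: "M \<in> {M \<in> partitions (m + j). (\<forall>x\<in>#M. j \<le> x) \<and> j \<in># M}"
    hence "M = add_mset j (M - {#j#})" by (simp add: insert_DiffM)
    moreover have "M - {#j#} \<in> partitions m"
      using M sum_mset.remove[of j M] by (auto simp: partitions_def dest: in_diffD)
    moreover have "\<forall>x\<in>#M - {#j#}. j \<le> x" using M by (auto dest: in_diffD)
    ultimately show "M \<in> add_mset j ` {M \<in> partitions m. \<forall>x\<in>#M. j \<le> x}" by blast
  qed
qed (use assms in \<open>auto simp: partitions_def\<close>)

lemma card_partitions_ge_containing:
  assumes "0 < j"
  shows "card {M \<in> partitions m. (\<forall>x\<in>#M. j \<le> x) \<and> j \<in># M} = part_count_ge j (int m - int j)"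
proof (cases "j \<le> m")
  case True
  define k where "k = m - j"
  have m: "m = k + j" using True by (simp add: k_def)
  have "card (add_mset j ` {M \<in> partitions k. \<forall>x\<in>#M. j \<le> x}) = card {M \<in> partitions k. \<forall>x\<in>#M. j \<le> x}"
    by (rule card_image) (simp add: inj_on_def)
  thus ?thesis
    unfolding m partitions_ge_containing_eq_image[OF assms] by (simp add: part_count_ge_def)
next
  case False
  have "\<not> (M \<in> partitions m \<and> j \<in># M)" for M
    using False member_le_sum_mset[of j M] unfolding partitions_def by auto
  hence empty: "{M \<in> partitions m. (\<forall>x\<in>#M. j \<le> x) \<and> j \<in># M} = {}" by blast
  show ?thesis unfolding empty using False by (simp add: part_count_ge_def)
qed

lemma part_count_ge_rec:
  assumes "0 < j"
  shows "part_count_ge j m = part_count_ge (Suc j) m + part_count_ge j (m - int j)"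
proof (cases "m < 0")
  case True thus ?thesis by (simp add: part_count_ge_def)
next
  case False
  define S where "S = {M \<in> partitions (nat m). \<forall>x\<in>#M. j \<le> x}"
  have "finite S" unfolding S_def using finite_partitions by auto
  hence "card S = card {M \<in> S. j \<notin># M} + card {M \<in> S. j \<in># M}"
    by (subst card_Un_disjoint[symmetric]) (auto intro: arg_cong[where f = card])
  moreover have "{M \<in> S. j \<notin># M} = {M \<in> partitions (nat m). \<forall>x\<in>#M. Suc j \<le> x}"
    unfolding S_def by (auto simp: Suc_le_eq le_less)
  moreover have "card {M \<in> S. j \<in># M} = part_count_ge j (m - int j)"
    using card_partitions_ge_containing[OF assms, of "nat m"] False
    by (simp add: S_def conj_assoc)
  ultimately show ?thesis using False by (simp add: part_count_ge_def S_def)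
qed

lemma inj_on_insert_Pow: "a \<notin> A \<Longrightarrow> inj_on (insert a) (Pow A)"
  by (intro inj_onI) (metis Diff_insert_absorb PowD subsetD)

lemma sum_Pow_insert:
  assumes "finite A" and "a \<notin> A"
  shows "(\<Sum>X\<in>Pow (insert a A). g X) = (\<Sum>X\<in>Pow A. g X) + (\<Sum>X\<in>Pow A. g (insert a X))"
proof -
  have "inj_on (insert a) (Pow A)" using assms(2) by (rule inj_on_insert_Pow)
  moreover have "(\<Sum>X\<in>Pow (insert a A). g X) = (\<Sum>X\<in>Pow A. g X) + (\<Sum>X\<in>insert a ` Pow A. g X)"
    unfolding Pow_insert by (rule sum.union_disjoint) (use assms in auto)
  ultimately show ?thesis by (simp add: sum.reindex)
qed

lemma
  fixes i :: nat
  assumes "T \<subseteq> {1..<i}"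
  shows sum_insert_above: "\<Sum>(insert i T) = i + \<Sum>T"
    and card_insert_above: "card (insert i T) = Suc (card T)"
proof -
  have "finite T" using assms by (rule finite_subset) simp
  moreover have "i \<notin> T" using assms by auto
  ultimately show "\<Sum>(insert i T) = i + \<Sum>T" and "card (insert i T) = Suc (card T)" by simp_all
qed

lemma part_count_ge_sieve:
  "int (part_count_ge i m) = (\<Sum>T\<in>Pow {1..<i}. (-1) ^ card T * int (part_count (m - int (\<Sum>T))))"
proof (induction i arbitrary: m)
  case 0
  show ?case by (simp add: part_count_ge_le_1)
next
  case (Suc i)
  define F where "F m T = (-1) ^ card T * int (part_count (m - int (\<Sum>T)))" for m T
  show ?case
  proof (cases "i = 0")
    case True
    thus ?thesis by (simp add: part_count_ge_le_1)
  next
    case False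
    have insert_i: "F m (insert i T) = - F (m - int i) T" if "T \<in> Pow {1..<i}" for T
    proof -
      have "T \<subseteq> {1..<i}" using that by auto
      thus ?thesis by (simp add: F_def sum_insert_above card_insert_above algebra_simps)
    qed
    have "{1..<Suc i} = insert i {1..<i}" using False by auto
    hence "(\<Sum>T\<in>Pow {1..<Suc i}. F m T) = (\<Sum>T\<in>Pow {1..<i}. F m T) + (\<Sum>T\<in>Pow {1..<i}. F m (insert i T))"
      by (simp add: sum_Pow_insert)
    also have "(\<Sum>T\<in>Pow {1..<i}. F m (insert i T)) = - (\<Sum>T\<in>Pow {1..<i}. F (m - int i) T)"
      unfolding sum_negf[symmetric] by (rule sum.cong) (simp_all add: insert_i)
    also have "(\<Sum>T\<in>Pow {1..<i}. F m T) + - (\<Sum>T\<in>Pow {1..<i}. F (m - int i) T)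
        = int (part_count_ge i m) - int (part_count_ge i (m - int i))"
      by (simp add: Suc.IH F_def)
    also have "\<dots> = int (part_count_ge (Suc i) m)"
      using part_count_ge_rec[of i m] False by simp
    finally show ?thesis by (simp add: F_def)
  qed
qed

lemma U_eq_image_insert:
  assumes "0 < i"
  shows "U s i = insert i ` {T \<in> Pow {1..<i}. card T + 1 = s}"
proof
  show "U s i \<subseteq> insert i ` {T \<in> Pow {1..<i}. card T + 1 = s}"
  proof
    fix S assume "S \<in> U s i"
    hence S: "S \<subseteq> {1..}" "finite S" "card S = s" "i \<in> S" "\<forall>x\<in>S. x \<le> i"
      by (simp_all add: U_def)
    have "S - {i} \<subseteq> {1..<i}" using S by (auto simp: less_le)
    moreover have "card (S - {i}) + 1 = s" using card.remove[OF S(2,4)] S(3) by simp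
    moreover have "S = insert i (S - {i})" using S(4) by auto
    ultimately show "S \<in> insert i ` {T \<in> Pow {1..<i}. card T + 1 = s}"
      by (intro image_eqI[of S "insert i" "S - {i}"]) auto
  qed
  show "insert i ` {T \<in> Pow {1..<i}. card T + 1 = s} \<subseteq> U s i"
  proof
    fix S assume "S \<in> insert i ` {T \<in> Pow {1..<i}. card T + 1 = s}"
    then obtain T where T: "T \<subseteq> {1..<i}" "card T + 1 = s" "S = insert i T" by auto
    thus "S \<in> U s i"
      using assms card_insert_above[OF T(1)] finite_subset[OF T(1)] by (auto simp: U_def)
  qed
qed

lemma alternating_sum_U_eq_sum_Pow:
  fixes f :: "nat \<Rightarrow> 'a :: comm_ring_1"
  assumes "0 < i"
  shows "(\<Sum>s = 1..i. (-1) ^ (s - 1) * (\<Sum>\<pi>\<in>U s i. f (\<Sum>\<pi>)))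
       = (\<Sum>T\<in>Pow {1..<i}. (-1) ^ card T * f (i + \<Sum>T))"
proof -
  define g where "g T = (-1) ^ card T * f (i + \<Sum>T)" for T
  have inj: "inj_on (insert i) (Pow {1..<i})" by (rule inj_on_insert_Pow) simp
  have layer: "(-1) ^ (s - 1) * (\<Sum>\<pi>\<in>U s i. f (\<Sum>\<pi>)) = (\<Sum>T\<in>{T \<in> Pow {1..<i}. card T + 1 = s}. g T)"
    for s
  proof -
    have "(\<Sum>\<pi>\<in>U s i. f (\<Sum>\<pi>)) = (\<Sum>T\<in>{T \<in> Pow {1..<i}. card T + 1 = s}. f (i + \<Sum>T))"
      unfolding U_eq_image_insert[OF assms]
      by (subst sum.reindex[OF inj_on_subset[OF inj]])
         (auto intro!: sum.cong simp: sum_insert_above)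
    moreover have "(-1) ^ (s - 1) * (\<Sum>T\<in>{T \<in> Pow {1..<i}. card T + 1 = s}. f (i + \<Sum>T))
        = (\<Sum>T\<in>{T \<in> Pow {1..<i}. card T + 1 = s}. g T)"
      by (auto simp: g_def sum_distrib_left intro!: sum.cong)
    ultimately show ?thesis by simp
  qed
  have "(\<Sum>s = 1..i. (-1) ^ (s - 1) * (\<Sum>\<pi>\<in>U s i. f (\<Sum>\<pi>)))
      = (\<Sum>s = 1..i. \<Sum>T\<in>{T \<in> Pow {1..<i}. card T + 1 = s}. g T)"
    by (intro sum.cong refl layer)
  also have "\<dots> = (\<Sum>T\<in>Pow {1..<i}. g T)"
  proof (rule sum.group)
    show "(\<lambda>T. card T + 1) ` Pow {1..<i} \<subseteq> {1..i}"
    proof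
      fix x assume "x \<in> (\<lambda>T. card T + 1) ` Pow {1..<i}"
      then obtain T where T: "T \<subseteq> {1..<i}" "x = card T + 1" by auto
      have "card T \<le> card {1..<i}" using T(1) by (intro card_mono) simp_all
      thus "x \<in> {1..i}" using T(2) assms by simp
    qed
  qed auto
  finally show ?thesis by (simp add: g_def)
qed

lemma Min_mset_eq_iff:
  "M \<noteq> {#} \<Longrightarrow> Min_mset M = (i::nat) \<longleftrightarrow> (\<forall>x\<in>#M. i \<le> x) \<and> i \<in># M"
  by (auto intro: Min_eqI)

theorem mainTheorem4:
  fixes n i :: nat
  assumes "n \<ge> 1" and "i \<ge> 1"
  shows "int (card {M \<in> partitions n. Min_mset M = i}) =
    (\<Sum>s = 1..i. (-1) ^ (s - 1) *
       (\<Sum>\<pi>\<in>U s i. int (part_count (int n - int (\<Sum>\<pi>)))))"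
proof -
  have "M \<noteq> {#}" if "M \<in> partitions n" for M
    using that assms(1) by (auto simp: partitions_def)
  hence "{M \<in> partitions n. Min_mset M = i} = {M \<in> partitions n. (\<forall>x\<in>#M. i \<le> x) \<and> i \<in># M}"
    using Min_mset_eq_iff by blast
  hence "card {M \<in> partitions n. Min_mset M = i} = part_count_ge i (int n - int i)"
    using card_partitions_ge_containing assms(2) by simp
  also have "int \<dots> = (\<Sum>T\<in>Pow {1..<i}. (-1) ^ card T * int (part_count (int n - int (i + \<Sum>T))))"
    by (simp add: part_count_ge_sieve algebra_simps)
  finally show ?thesis
    using alternating_sum_U_eq_sum_Pow[of i "\<lambda>x. int (part_count (int n - int x))"] assms(2) by simp
qed

end
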